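(* Consider the setting described in the context and suppose the stepsizes satisfy conditions (A), (B) and (C). Let $u^\star=(x^\star,y^\star)$ satisfy $0\in F(x^\star)+A^Ty^\star$ and $0\in G(y^\star)-Ax^\star$. Then there is a constant $C_U>0$ such that the PDHG iterates satisfy $\|u_k-u^\star\|_{H_k}^2\le C_U$ for all $k$.
   Context: Let $A\in\mathbb{R}^{M\times N}$, let $f$ and $g$ be convex functions on $\mathbb{R}^N$ and $\mathbb{R}^M$, and let $X\subset\mathbb{R}^N$, $Y\subset\mathbb{R}^M$ be convex sets; consider the saddle-point problem $\min_{x\in X}\max_{y\in Y} f(x)+y^TAx-g(y)$. Let $\chi_C$ denote the characteristic function of a set $C$ ($0$ on $C$, $+\infty$ off $C$), and let $F=\partial(f+\chi_X)$, $G=\partial(g+\chi_Y)$. It is assumed that the problem is feasible (such $u^\star$ exists) and that the minimizations below have solutions. The PDHG method with stepsizes $\tau_k,\sigma_k>0$ starts from $x_0,y_0$ and iterates $x_{k+1}=\arg\min_{x\in X} f(x)+\frac{1}{2\tau_k}\|x-(x_k-\tau_kA^Ty_k)\|^2$, $y_{k+1}=\arg\min_{y\in Y} g(y)+\frac{1}{2\sigma_k}\|y-(y_k+\sigma_kA(2x_{k+1}-x_k))\|^2$. Write $u_k=(x_k,y_k)$, $M_k=\begin{pmatrix}\tau_k^{-1}I & -A^T\\ -A & \sigma_k^{-1}I\end{pmatrix}$, $H_k=\begin{pmatrix}\tau_k^{-1}I & 0\\ 0 & \sigma_k^{-1}I\end{pmatrix}$, and for a symmetric (possibly indefinite) matrix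 $M$, $\|u\|_M^2:=u^TMu$. Let $\phi_k=\max\{(\tau_k-\tau_{k+1})/\tau_k,\ (\sigma_k-\sigma_{k+1})/\sigma_k,\ 0\}$. Conditions: (A) the sequences $\{\tau_k\}$ and $\{\sigma_k\}$ are bounded; (B) $\sum_{k\ge0}\phi_k<C_\phi<\infty$ for some constant $C_\phi$; (C) either (C1) there is a constant $L$ with $\tau_k\sigma_k<L<\rho(A^TA)^{-1}$ for all $k>0$ ($\rho$ = spectral radius), or (C2) either $X$ or $Y$ is bounded and there is $c\in(0,1)$ with $\|u_{k+1}-u_k\|_{M_k}^2\ge c\|u_{k+1}-u_k\|_{H_k}^2$ for all $k>0$. *)

theory Defs
  imports "HOL-Analysis.Analysis"
begin

definition char_fun :: "'a set \<Rightarrow> 'a \<Rightarrow> ereal" where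
  "char_fun C x = (if x \<in> C then 0 else \<infinity>)"

definition subdiff :: "('a::real_inner \<Rightarrow> ereal) \<Rightarrow> 'a \<Rightarrow> 'a set" where
  "subdiff h x = {v. h x < \<infinity> \<and> (\<forall>z. h x + ereal (v \<bullet> (z - x)) \<le> h z)}"

text \<open>Real eigenvalues of a real square matrix and spectral radius.
  (Used only for the symmetric matrix A^T A, all of whose eigenvalues are real.)\<close>
definition real_eigenvalue :: "real^'n^'n \<Rightarrow> real \<Rightarrow> bool" where
  "real_eigenvalue B l \<longleftrightarrow> (\<exists>v. v \<noteq> 0 \<and> B *v v = l *\<^sub>R v)"

definition spectral_radius_sym :: "real^'n^'n \<Rightarrow> real" where
  "spectral_radius_sym B = Sup {\<bar>l\<bar> | l. real_eigenvalue B l}"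

text \<open>Weighted squared norm (norm of u in H, squared) with H = diag(tau^-1 I, sg^-1 I), for u = (x,y).\<close>
definition H_norm2 :: "real \<Rightarrow> real \<Rightarrow> real^'n \<Rightarrow> real^'m \<Rightarrow> real" where
  "H_norm2 tau sg x y = (norm x)^2 / tau + (norm y)^2 / sg"

text \<open>Quadratic form \<open>u^T M u\<close> with M = [[tau^-1 I, -A^T],[-A, sg^-1 I]], for u = (x,y).\<close>
definition M_norm2 :: "real^'n^'m \<Rightarrow> real \<Rightarrow> real \<Rightarrow> real^'n \<Rightarrow> real^'m \<Rightarrow> real" where
  "M_norm2 A tau sg x y =
     (norm x)^2 / tau - x \<bullet> (transpose A *v y) - y \<bullet> (A *v x) + (norm y)^2 / sg"

definition phi :: "(nat \<Rightarrow> real) \<Rightarrow> (nat \<Rightarrow> real) \<Rightarrow> nat \<Rightarrow> real" where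
  "phi tau sg k = Max {(tau k - tau (Suc k)) / tau k, (sg k - sg (Suc k)) / sg k, 0}"

end

theory Submission
  imports Defs
begin

(*
  Each PDHG iteration consists of two proximal steps. Their variational inequalities, added to
  the saddle-point inclusions, give the Fejer-type estimate
    |u(k+1) - u*|^2_{M_k} + |u(k+1) - u(k)|^2_{M_k} <= |u(k) - u*|^2_{M_k}.
  Condition (C) makes the indefinite form M_k coercive with respect to H_k: uniformly when
  tau*sigma*rho(A^T A) < 1, and up to an additive constant when X or Y is bounded (using (A));
  in both cases the step term above is nonnegative. Changing the stepsizes from k to k+1 costs
  at most phi_k times the H_{k+1}-norm, so with |.|^2_H <= a |.|^2_M + K the quantity
  E_k = |u(k) - u*|^2_{M_k} + K/a satisfies E_{k+1} (1 - a phi_k) <= E_k, and summability of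
  phi (B) bounds E_k, as in Gronwall's lemma.
*)

lemma nonneg_of_nonneg_add_small:
  fixes q c :: real
  assumes "\<And>s. 0 < s \<Longrightarrow> s \<le> 1 \<Longrightarrow> 0 \<le> q + s * c"
  shows "0 \<le> q"
proof (rule ccontr)
  assume "\<not> 0 \<le> q"
  define s where "s = min 1 (- q / (2 * (\<bar>c\<bar> + 1)))"
  have "0 < - q / (2 * (\<bar>c\<bar> + 1))"
    using \<open>\<not> 0 \<le> q\<close> by (intro divide_pos_pos) auto
  then have "0 < s" "s \<le> 1"
    by (auto simp: s_def)
  have "s * c \<le> s * \<bar>c\<bar>"
    using \<open>0 < s\<close> by (simp add: mult_left_mono)
  also have "\<dots> \<le> - q / (2 * (\<bar>c\<bar> + 1)) * \<bar>c\<bar>"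
    by (intro mult_right_mono) (auto simp: s_def)
  also have "\<dots> < - q"
    using \<open>\<not> 0 \<le> q\<close> mult_nonpos_nonneg[of q "\<bar>c\<bar>"] by (simp add: field_simps)
  finally show False
    using assms[OF \<open>0 < s\<close> \<open>s \<le> 1\<close>] by linarith
qed

lemma linear_coeff_eq_0_of_quadratic_nonpos:
  fixes b c :: real
  assumes "\<And>t. t * b + t\<^sup>2 * c \<le> 0"
  shows "b = 0"
proof (rule ccontr)
  assume "b \<noteq> 0"
  define K where "K = \<bar>c\<bar> + 1"
  have "K > 0" "K + c > 0"
    by (auto simp: K_def)
  have "(b / K) * b + (b / K)\<^sup>2 * c = b\<^sup>2 * (K + c) / K\<^sup>2"
    using \<open>K > 0\<close> by (simp add: field_simps power2_eq_square)
  also have "\<dots> > 0"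
    using \<open>b \<noteq> 0\<close> \<open>K > 0\<close> \<open>K + c > 0\<close> by (intro divide_pos_pos mult_pos_pos) auto
  finally show False
    using assms[of "b / K"] by linarith
qed

lemma two_mult_le_sqrt_mult:
  fixes a b t s :: real
  assumes "t > 0" "s > 0"
  shows "2 * a * b \<le> sqrt (t * s) * (a\<^sup>2 / t + b\<^sup>2 / s)"
proof -
  define p r where "p = sqrt t" and "r = sqrt s"
  have "p > 0" "r > 0" "t = p\<^sup>2" "s = r\<^sup>2"
    using assms by (simp_all add: p_def r_def)
  have "2 * a * b * (p * r) \<le> a\<^sup>2 * r\<^sup>2 + b\<^sup>2 * p\<^sup>2"
    using zero_le_power2[of "a * r - b * p"] by (simp add: power2_eq_square algebra_simps)
  then have "2 * a * b \<le> (a\<^sup>2 * r\<^sup>2 + b\<^sup>2 * p\<^sup>2) / (p * r)"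
    using \<open>p > 0\<close> \<open>r > 0\<close> by (simp add: pos_le_divide_eq)
  also have "\<dots> = sqrt (t * s) * (a\<^sup>2 / t + b\<^sup>2 / s)"
    using \<open>p > 0\<close> \<open>r > 0\<close> unfolding \<open>t = p\<^sup>2\<close> \<open>s = r\<^sup>2\<close>
    by (simp add: real_sqrt_mult field_simps power2_eq_square)
  finally show ?thesis .
qed

lemma le_mult_exp_of_mult_one_minus_le:
  fixes a b u :: real
  assumes "0 \<le> u" "u \<le> 1 / 2" "0 \<le> b" "b * (1 - u) \<le> a"
  shows "b \<le> a * exp (2 * u)"
proof -
  have "0 \<le> a"
    using assms mult_nonneg_nonneg[of b "1 - u"] by linarith
  have "1 \<le> (1 - u) * (1 + 2 * u)"
    using assms(1,2) mult_nonneg_nonneg[of u "1 - 2 * u"] by (simp add: algebra_simps)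
  then have "b \<le> b * (1 - u) * (1 + 2 * u)"
    using \<open>0 \<le> b\<close> mult_left_mono[of 1 _ b] by (simp add: mult.assoc)
  also have "\<dots> \<le> a * (1 + 2 * u)"
    using assms by (intro mult_right_mono) auto
  also have "\<dots> \<le> a * exp (2 * u)"
    using \<open>0 \<le> a\<close> by (intro mult_left_mono) (auto intro: exp_ge_add_one_self)
  finally show ?thesis .
qed

lemma bounded_of_summable_perturbed_decrease:
  fixes F p :: "nat \<Rightarrow> real"
  assumes F_nonneg: "\<And>k. m \<le> k \<Longrightarrow> 0 \<le> F k"
    and p_nonneg: "\<And>k. 0 \<le> p k" and "summable p"
    and decrease: "\<And>k. m \<le> k \<Longrightarrow> F (Suc k) * (1 - p k) \<le> F k"
  shows "\<exists>B. \<forall>k\<ge>m. F k \<le> B"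
proof -
  have "eventually (\<lambda>k. p k < 1 / 2) sequentially"
    using summable_LIMSEQ_zero[OF \<open>summable p\<close>] by (rule order_tendstoD) simp
  then obtain N0 where N0: "\<And>k. N0 \<le> k \<Longrightarrow> p k < 1 / 2"
    by (auto simp: eventually_sequentially)
  define N where "N = max m N0"
  have "m \<le> N"
    by (simp add: N_def)
  then have "0 \<le> F N"
    by (rule F_nonneg)
  have growth: "F k \<le> F N * exp (2 * (\<Sum>i\<in>{N..<k}. p i))" if "N \<le> k" for k
    using that
  proof (induction k rule: dec_induct)
    case (step k)
    have "F (Suc k) \<le> F k * exp (2 * p k)"
      using step.hyps N0[of k] \<open>m \<le> N\<close> by (intro le_mult_exp_of_mult_one_minus_le p_nonneg F_nonneg decrease)
        (auto simp: N_def)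
    also have "\<dots> \<le> F N * exp (2 * (\<Sum>i\<in>{N..<k}. p i)) * exp (2 * p k)"
      using step.IH by (intro mult_right_mono) auto
    finally show ?case
      using step.hyps by (simp add: mult.assoc exp_add[symmetric] algebra_simps)
  qed simp
  define B where "B = (\<Sum>i\<in>{m..N}. F i) + F N * exp (2 * suminf p)"
  have "F k \<le> B" if "m \<le> k" for k
  proof (cases "k \<le> N")
    case True
    then have "F k \<le> (\<Sum>i\<in>{m..N}. F i)"
      using \<open>m \<le> k\<close> F_nonneg by (intro member_le_sum) auto
    moreover have "0 \<le> F N * exp (2 * suminf p)"
      using \<open>0 \<le> F N\<close> by simp
    ultimately show ?thesis
      by (simp add: B_def)
  next
    case False
    have "(\<Sum>i\<in>{N..<k}. p i) \<le> suminf p"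
      using \<open>summable p\<close> p_nonneg by (intro sum_le_suminf) auto
    then have "F N * exp (2 * (\<Sum>i\<in>{N..<k}. p i)) \<le> F N * exp (2 * suminf p)"
      using \<open>0 \<le> F N\<close> by (intro mult_left_mono) auto
    then have "F k \<le> F N * exp (2 * suminf p)"
      using growth[of k] False by linarith
    moreover have "0 \<le> (\<Sum>i\<in>{m..N}. F i)"
      using F_nonneg by (intro sum_nonneg) auto
    ultimately show ?thesis
      by (simp add: B_def)
  qed
  then show ?thesis
    by blast
qed

lemma transpose_uminus: "transpose (- A) = - transpose (A::'a::ring_1^'n^'m)"
  by (simp add: transpose_def vec_eq_iff)

lemma uminus_matrix_vector_mult: "(- A) *v v = - (A *v (v::'a::ring_1^'n))"
  by (simp add: matrix_vector_mult_def vec_eq_iff sum_negf)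

lemma inner_transpose_mult_vec: "(x::real^'n) \<bullet> (transpose A *v y) = y \<bullet> (A *v x)"
  by (metis transpose_matrix_vector inner_commute dot_lmul_matrix)

lemma inner_mult_vec_mult_vec: "(A *v u) \<bullet> (A *v w) = ((transpose A ** A) *v u) \<bullet> (w::real^'n)"
  for A :: "real^'n^'m"
  by (metis matrix_vector_mul_assoc[symmetric] transpose_matrix_vector dot_lmul_matrix inner_commute)

lemma bdd_above_abs_real_eigenvalues: "bdd_above {\<bar>l\<bar> | l. real_eigenvalue B l}"
proof (rule bdd_aboveI)
  fix r assume "r \<in> {\<bar>l\<bar> | l. real_eigenvalue B l}"
  then obtain l u where "r = \<bar>l\<bar>" "u \<noteq> 0" "B *v u = l *\<^sub>R u"
    by (auto simp: real_eigenvalue_def)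
  then have "\<bar>l\<bar> * norm u \<le> onorm ((*v) B) * norm u"
    using onorm[OF matrix_vector_mul_bounded_linear, of B u] by simp
  then show "r \<le> onorm ((*v) B)"
    using \<open>u \<noteq> 0\<close> \<open>r = \<bar>l\<bar>\<close> by simp
qed

text \<open>The first-order condition for the maximiser \<open>v\<close> in a direction \<open>w\<close> is the eigenvalue
  equation for \<open>transpose A ** A\<close> tested against \<open>w\<close>.\<close>
lemma real_eigenvalue_of_maximizer:
  fixes A :: "real^'n^'m"
  assumes "norm v = 1" and max: "\<And>u. (norm (A *v u))\<^sup>2 \<le> (norm (A *v v))\<^sup>2 * (norm u)\<^sup>2"
  shows "real_eigenvalue (transpose A ** A) ((norm (A *v v))\<^sup>2)"
proof -
  define lam where "lam = (norm (A *v v))\<^sup>2"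
  have "(A *v v) \<bullet> (A *v w) - lam * (v \<bullet> w) = 0" for w
  proof -
    have "t * (2 * ((A *v v) \<bullet> (A *v w) - lam * (v \<bullet> w))) + t\<^sup>2 * ((norm (A *v w))\<^sup>2 - lam * (norm w)\<^sup>2) \<le> 0"
      for t
    proof -
      have "(norm (A *v (v + t *\<^sub>R w)))\<^sup>2 \<le> lam * (norm (v + t *\<^sub>R w))\<^sup>2"
        using max unfolding lam_def .
      moreover have "(norm (A *v (v + t *\<^sub>R w)))\<^sup>2
          = lam + t * (2 * ((A *v v) \<bullet> (A *v w))) + t\<^sup>2 * (norm (A *v w))\<^sup>2"
        using dot_norm[of "A *v v" "t *\<^sub>R (A *v w)"]
        by (simp add: lam_def matrix_vector_right_distrib matrix_vector_mult_scaleR power_mult_distrib)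
      moreover have "(norm (v + t *\<^sub>R w))\<^sup>2 = 1 + t * (2 * (v \<bullet> w)) + t\<^sup>2 * (norm w)\<^sup>2"
        using dot_norm[of v "t *\<^sub>R w"] \<open>norm v = 1\<close> by (simp add: power_mult_distrib)
      ultimately show ?thesis
        by (simp add: algebra_simps)
    qed
    then have "2 * ((A *v v) \<bullet> (A *v w) - lam * (v \<bullet> w)) = 0"
      by (rule linear_coeff_eq_0_of_quadratic_nonpos)
    then show ?thesis
      by simp
  qed
  then have "((transpose A ** A) *v v - lam *\<^sub>R v) \<bullet> w = 0" for w
    by (simp add: inner_mult_vec_mult_vec inner_diff_left)
  from this[of "(transpose A ** A) *v v - lam *\<^sub>R v"] \<open>norm v = 1\<close>
  show ?thesis
    unfolding real_eigenvalue_def lam_def by (intro exI[of _ v]) auto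
qed

lemma norm_mult_vec_sq_le_spectral_radius:
  fixes A :: "real^'n^'m"
  shows "(norm (A *v u))\<^sup>2 \<le> spectral_radius_sym (transpose A ** A) * (norm u)\<^sup>2"
proof -
  define q where "q = (\<lambda>u::real^'n. (norm (A *v u))\<^sup>2)"
  have "continuous_on (sphere 0 1) q"
    unfolding q_def by (intro continuous_intros linear_continuous_on matrix_vector_mul_bounded_linear)
  moreover have "(axis undefined 1 :: real^'n) \<in> sphere 0 1"
    by (simp add: norm_axis_1)
  ultimately obtain v where v: "v \<in> sphere 0 1" and max_sphere: "\<And>w. w \<in> sphere 0 1 \<Longrightarrow> q w \<le> q v"
    using continuous_attains_sup[OF compact_sphere] by blast
  have max: "q w \<le> q v * (norm w)\<^sup>2" for w
  proof (cases "w = 0")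
    case False
    then have "q ((1 / norm w) *\<^sub>R w) \<le> q v"
      by (intro max_sphere) simp
    moreover have "q w = (norm w)\<^sup>2 * q ((1 / norm w) *\<^sub>R w)"
      using False by (simp add: q_def matrix_vector_mult_scaleR power_divide)
    ultimately show ?thesis
      by (metis mult.commute mult_left_mono zero_le_power2)
  qed (simp add: q_def)
  have "real_eigenvalue (transpose A ** A) (q v)"
    using real_eigenvalue_of_maximizer[of v A] v max by (simp add: q_def)
  then have "q v \<le> spectral_radius_sym (transpose A ** A)"
    unfolding spectral_radius_sym_def
    by (intro cSup_upper[OF _ bdd_above_abs_real_eigenvalues]) (auto simp: q_def intro!: exI[of _ "q v"])
  then show ?thesis
    using max[of u] by (simp add: q_def) (meson mult_right_mono order_trans zero_le_power2)
qed

lemma spectral_radius_sym_nonneg: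
  fixes A :: "real^'n^'m"
  shows "0 \<le> spectral_radius_sym (transpose A ** A)"
  using norm_mult_vec_sq_le_spectral_radius[of A "axis undefined 1"]
  by (simp add: norm_axis_1) (meson order_trans zero_le_power2)

lemma H_norm2_nonneg: "t > 0 \<Longrightarrow> s > 0 \<Longrightarrow> 0 \<le> H_norm2 t s d e"
  by (simp add: H_norm2_def)

lemma H_norm2_swap: "H_norm2 s t e d = H_norm2 t s d e"
  by (simp add: H_norm2_def)

lemma M_norm2_eq: "M_norm2 A t s d e = (norm d)\<^sup>2 / t + (norm e)\<^sup>2 / s - 2 * (e \<bullet> (A *v d))"
  unfolding M_norm2_def inner_transpose_mult_vec by simp

lemma M_norm2_transpose:
  fixes A :: "real^'n^'m"
  shows "M_norm2 (transpose A) s t e d = M_norm2 A t s d e"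
  unfolding M_norm2_eq by (simp add: inner_transpose_mult_vec[symmetric] inner_commute)

lemma M_norm2_uminus: "M_norm2 A t s (- d) (- e) = M_norm2 A t s d e"
proof -
  have "A *v (- d) = - (A *v d)"
    by (metis diff_0 matrix_vector_mult_0_right matrix_vector_mult_diff_distrib)
  then show ?thesis
    by (simp add: M_norm2_eq)
qed

lemma M_norm2_add:
  fixes A :: "real^'n^'m"
  shows "M_norm2 A t s (d + p) (e + r) = M_norm2 A t s d e + M_norm2 A t s p r
           + 2 * ((d \<bullet> p) / t + (e \<bullet> r) / s - e \<bullet> (A *v p) - r \<bullet> (A *v d))"
  unfolding M_norm2_eq power2_norm_eq_inner
  by (simp add: matrix_vector_right_distrib inner_add_left inner_add_right inner_commute
      add_divide_distrib algebra_simps)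

lemma M_norm2_stepsize_change:
  assumes "t > 0" "t' > 0" "s > 0" "s' > 0" "(t - t') / t \<le> p" "(s - s') / s \<le> p"
  shows "M_norm2 A t' s' d e \<le> M_norm2 A t s d e + p * H_norm2 t' s' d e"
proof -
  have "1 / t' - 1 / t \<le> p / t'"
  proof -
    have "(t - t') / (t * t') \<le> (p * t) / (t * t')"
      using assms by (intro divide_right_mono) (auto simp: pos_divide_le_eq)
    then show ?thesis
      using assms by (simp add: field_simps)
  qed
  moreover have "1 / s' - 1 / s \<le> p / s'"
  proof -
    have "(s - s') / (s * s') \<le> (p * s) / (s * s')"
      using assms by (intro divide_right_mono) (auto simp: pos_divide_le_eq)
    then show ?thesis
      using assms by (simp add: field_simps)
  qed
  ultimately have "(norm d)\<^sup>2 * (1 / t' - 1 / t) \<le> (norm d)\<^sup>2 * (p / t')"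
    and "(norm e)\<^sup>2 * (1 / s' - 1 / s) \<le> (norm e)\<^sup>2 * (p / s')"
    by (simp_all only: mult_left_mono zero_le_power2)
  then show ?thesis
    unfolding M_norm2_def H_norm2_def by (simp add: algebra_simps)
qed

lemma M_norm2_ge_H_norm2_spectral:
  fixes A :: "real^'n^'m"
  assumes "t > 0" "s > 0" and theta: "t * s * spectral_radius_sym (transpose A ** A) \<le> theta"
  shows "(1 - sqrt theta) * H_norm2 t s d e \<le> M_norm2 A t s d e"
proof -
  define rho where "rho = spectral_radius_sym (transpose A ** A)"
  have "(norm (A *v d))\<^sup>2 \<le> rho * (norm d)\<^sup>2"
    unfolding rho_def by (rule norm_mult_vec_sq_le_spectral_radius)
  then have "norm (A *v d) \<le> sqrt rho * norm d"
    by (metis norm_ge_zero real_le_rsqrt real_sqrt_mult real_sqrt_abs abs_norm_cancel)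
  then have "norm e * norm (A *v d) \<le> norm e * (sqrt rho * norm d)"
    by (simp add: mult_left_mono)
  then have "e \<bullet> (A *v d) \<le> norm e * (sqrt rho * norm d)"
    using order_trans[OF abs_ge_self Cauchy_Schwarz_ineq2, of e "A *v d"] by linarith
  then have "2 * (e \<bullet> (A *v d)) \<le> sqrt rho * (2 * norm d * norm e)"
    by (simp add: algebra_simps)
  also have "\<dots> \<le> sqrt rho * (sqrt (t * s) * H_norm2 t s d e)"
    using two_mult_le_sqrt_mult[OF assms(1,2), of "norm d" "norm e"]
    using spectral_radius_sym_nonneg[of A] by (intro mult_left_mono) (auto simp: H_norm2_def rho_def)
  also have "\<dots> \<le> sqrt theta * H_norm2 t s d e"
  proof -
    have "sqrt rho * sqrt (t * s) \<le> sqrt theta"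
      using theta by (simp add: rho_def real_sqrt_mult[symmetric] mult.commute)
    moreover have "0 \<le> H_norm2 t s d e"
      using assms by (simp add: H_norm2_def)
    ultimately show ?thesis
      by (metis mult.assoc mult_right_mono)
  qed
  finally have "2 * (e \<bullet> (A *v d)) \<le> sqrt theta * H_norm2 t s d e" .
  moreover have "M_norm2 A t s d e - (1 - sqrt theta) * H_norm2 t s d e
      = sqrt theta * H_norm2 t s d e - 2 * (e \<bullet> (A *v d))"
    unfolding M_norm2_eq H_norm2_def using assms(1,2) by (simp add: field_simps)
  ultimately show ?thesis
    by linarith
qed

lemma H_norm2_le_M_norm2_of_norm_fst_le:
  fixes A :: "real^'n^'m"
  assumes "t > 0" "s > 0" "s \<le> S" "norm d \<le> D"
  shows "H_norm2 t s d e \<le> 2 * M_norm2 A t s d e + 4 * S * (onorm ((*v) A))\<^sup>2 * D\<^sup>2"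
proof -
  define c where "c = onorm ((*v) A) * D"
  have "0 \<le> onorm ((*v) A)"
    by (rule onorm_pos_le[OF matrix_vector_mul_bounded_linear])
  then have "norm (A *v d) \<le> c"
    using onorm[OF matrix_vector_mul_bounded_linear, of A d] \<open>norm d \<le> D\<close>
    unfolding c_def by (meson mult_left_mono order_trans)
  then have "norm e * norm (A *v d) \<le> norm e * c"
    by (simp add: mult_left_mono)
  then have "e \<bullet> (A *v d) \<le> norm e * c"
    using order_trans[OF abs_ge_self Cauchy_Schwarz_ineq2, of e "A *v d"] by linarith
  moreover have "4 * norm e * c \<le> (norm e)\<^sup>2 / s + 4 * s * c\<^sup>2"
  proof -
    have "0 \<le> (norm e - 2 * s * c)\<^sup>2 / s"
      using \<open>s > 0\<close> by simp
    then show ?thesis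
      using \<open>s > 0\<close> by (simp add: field_simps power2_eq_square)
  qed
  moreover have "s * c\<^sup>2 \<le> S * c\<^sup>2"
    using \<open>s \<le> S\<close> by (simp add: mult_right_mono)
  moreover have "0 \<le> (norm d)\<^sup>2 / t"
    using \<open>t > 0\<close> by simp
  ultimately show ?thesis
    unfolding M_norm2_eq H_norm2_def c_def by (simp add: power_mult_distrib algebra_simps)
qed

lemma H_norm2_le_M_norm2_of_norm_snd_le:
  fixes A :: "real^'n^'m"
  assumes "t > 0" "s > 0" "t \<le> T" "norm e \<le> D"
  shows "H_norm2 t s d e \<le> 2 * M_norm2 A t s d e + 4 * T * (onorm ((*v) (transpose A)))\<^sup>2 * D\<^sup>2"
  using H_norm2_le_M_norm2_of_norm_fst_le[OF assms(2,1,3,4), of d "transpose A"]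
  by (simp only: M_norm2_transpose H_norm2_swap[of s t e d])

lemma prox_variational_inequality:
  fixes f :: "'a::real_inner \<Rightarrow> real"
  assumes "convex_on UNIV f" "convex X" "t > 0"
    and prox: "is_arg_min (\<lambda>z. f z + (norm (z - p))\<^sup>2 / (2 * t)) (\<lambda>z. z \<in> X) q"
    and "z \<in> X"
  shows "f q + ((p - q) \<bullet> (z - q)) / t \<le> f z"
proof -
  have "q \<in> X"
    using prox by (simp add: is_arg_min_def)
  define d where "d = z - q"
  have "0 \<le> f z - f q - ((p - q) \<bullet> d) / t + s * ((norm d)\<^sup>2 / (2 * t))"
    if "0 < s" "s \<le> 1" for s
  proof -
    have seg: "q + s *\<^sub>R d = (1 - s) *\<^sub>R q + s *\<^sub>R z"
      by (simp add: d_def algebra_simps)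
    have "q + s *\<^sub>R d \<in> X"
      unfolding seg using \<open>convex X\<close> \<open>q \<in> X\<close> \<open>z \<in> X\<close> that by (simp add: convex_def)
    then have "f q + (norm (q - p))\<^sup>2 / (2 * t) \<le> f (q + s *\<^sub>R d) + (norm (q + s *\<^sub>R d - p))\<^sup>2 / (2 * t)"
      using prox unfolding is_arg_min_def by (metis not_less)
    moreover have "f (q + s *\<^sub>R d) \<le> (1 - s) * f q + s * f z"
      unfolding seg using convex_onD[OF assms(1), of s q z] that by simp
    moreover have "(norm (q + s *\<^sub>R d - p))\<^sup>2 = (norm (q - p))\<^sup>2 + (2 * s * ((q - p) \<bullet> d) + s\<^sup>2 * (norm d)\<^sup>2)"
      using dot_norm[of "q - p" "s *\<^sub>R d"] by (simp add: algebra_simps power_mult_distrib)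
    ultimately have "f q \<le> (1 - s) * f q + s * f z + (2 * s * ((q - p) \<bullet> d) + s\<^sup>2 * (norm d)\<^sup>2) / (2 * t)"
      by (simp add: add_divide_distrib)
    then have "0 \<le> s * (f z - f q) + (2 * s * ((q - p) \<bullet> d) + s\<^sup>2 * (norm d)\<^sup>2) / (2 * t)"
      by (simp add: algebra_simps)
    also have "\<dots> = s * (f z - f q - ((p - q) \<bullet> d) / t + s * ((norm d)\<^sup>2 / (2 * t)))"
      using \<open>t > 0\<close> by (simp add: field_simps power2_eq_square inner_diff_left)
    finally show ?thesis
      using \<open>0 < s\<close> by (simp add: zero_le_mult_iff)
  qed
  then have "0 \<le> f z - f q - ((p - q) \<bullet> d) / t"
    by (rule nonneg_of_nonneg_add_small)
  then show ?thesis
    by (simp add: d_def)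
qed

lemma subdiff_add_char_funD:
  assumes "v \<in> subdiff (\<lambda>z. ereal (f z) + char_fun X z) x"
  shows "x \<in> X" and "\<And>z. z \<in> X \<Longrightarrow> f x + v \<bullet> (z - x) \<le> f z"
proof -
  have fin: "ereal (f x) + char_fun X x < \<infinity>"
    and le: "\<And>z. ereal (f x) + char_fun X x + ereal (v \<bullet> (z - x)) \<le> ereal (f z) + char_fun X z"
    using assms by (auto simp: subdiff_def)
  show "x \<in> X"
    using fin by (auto simp: char_fun_def split: if_splits)
  then show "f x + v \<bullet> (z - x) \<le> f z" if "z \<in> X" for z
    using le[of z] that by (simp add: char_fun_def)
qed

text \<open>Stated for the primal half-step; the dual half-step is the instance \<open>B = - transpose A\<close>
  with the roles of the primal and dual variables exchanged.\<close>
lemma prox_step_saddle_ineq: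
  fixes B :: "real^'n^'m"
  assumes "convex_on UNIV f" "convex X" "t > 0"
    and step: "is_arg_min (\<lambda>z. f z + (norm (z - (xk - t *\<^sub>R (transpose B *v u))))\<^sup>2 / (2 * t))
                 (\<lambda>z. z \<in> X) xp"
    and saddle: "0 \<in> (\<lambda>v. v + transpose B *v us) ` subdiff (\<lambda>z. ereal (f z) + char_fun X z) xs"
  shows "0 \<le> ((xk - xp) \<bullet> (xp - xs)) / t - (u - us) \<bullet> (B *v (xp - xs))"
proof -
  obtain v where v: "v \<in> subdiff (\<lambda>z. ereal (f z) + char_fun X z) xs" "v = - (transpose B *v us)"
    using saddle by (auto simp: add_eq_0_iff)
  have "xp \<in> X"
    using step by (simp add: is_arg_min_def)
  have "f xp + ((xk - t *\<^sub>R (transpose B *v u) - xp) \<bullet> (xs - xp)) / t \<le> f xs"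
    using prox_variational_inequality[OF assms(1-3) step subdiff_add_char_funD(1)[OF v(1)]] .
  moreover have "f xs + v \<bullet> (xp - xs) \<le> f xp"
    using subdiff_add_char_funD(2)[OF v(1) \<open>xp \<in> X\<close>] .
  moreover have "((xk - t *\<^sub>R (transpose B *v u) - xp) \<bullet> (xs - xp)) / t
      = - (((xk - xp) \<bullet> (xp - xs)) / t) + u \<bullet> (B *v (xp - xs))"
  proof -
    have "(xk - t *\<^sub>R (transpose B *v u) - xp) \<bullet> (xs - xp)
        = - ((xk - xp) \<bullet> (xp - xs)) + t * ((xp - xs) \<bullet> (transpose B *v u))"
      by (simp add: inner_diff_left inner_diff_right inner_commute algebra_simps del: transpose_matrix_vector)
    then show ?thesis
      using \<open>t > 0\<close> by (simp add: inner_transpose_mult_vec field_simps del: transpose_matrix_vector)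
  qed
  moreover have "v \<bullet> (xp - xs) = - (us \<bullet> (B *v (xp - xs)))"
    using inner_transpose_mult_vec[of "xp - xs" B us]
    by (simp add: v(2) inner_commute del: transpose_matrix_vector)
  ultimately show ?thesis
    by (simp add: inner_diff_left)
qed

lemma pdhg_fejer:
  fixes A :: "real^'n^'m"
  assumes "convex_on UNIV f" "convex_on UNIV g" "convex X" "convex Y" "t > 0" "s > 0"
    and x_step: "is_arg_min (\<lambda>z. f z + (norm (z - (xk - t *\<^sub>R (transpose A *v yk))))\<^sup>2 / (2 * t))
                   (\<lambda>z. z \<in> X) xp"
    and y_step: "is_arg_min (\<lambda>w. g w + (norm (w - (yk + s *\<^sub>R (A *v (2 *\<^sub>R xp - xk)))))\<^sup>2 / (2 * s))
                   (\<lambda>w. w \<in> Y) yp"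
    and saddle_x: "0 \<in> (\<lambda>v. v + transpose A *v ys) ` subdiff (\<lambda>z. ereal (f z) + char_fun X z) xs"
    and saddle_y: "0 \<in> (\<lambda>v. v - A *v xs) ` subdiff (\<lambda>w. ereal (g w) + char_fun Y w) ys"
  shows "M_norm2 A t s (xp - xs) (yp - ys) + M_norm2 A t s (xp - xk) (yp - yk)
           \<le> M_norm2 A t s (xk - xs) (yk - ys)"
proof -
  have primal: "0 \<le> ((xk - xp) \<bullet> (xp - xs)) / t - (yk - ys) \<bullet> (A *v (xp - xs))"
    by (rule prox_step_saddle_ineq[OF assms(1,3,5) x_step saddle_x])
  have "0 \<le> ((yk - yp) \<bullet> (yp - ys)) / s - (2 *\<^sub>R xp - xk - xs) \<bullet> (- transpose A *v (yp - ys))"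
    using y_step saddle_y
    by (intro prox_step_saddle_ineq[OF assms(2,4,6)])
      (simp_all add: transpose_uminus uminus_matrix_vector_mult)
  moreover have "(2 *\<^sub>R xp - xk - xs) \<bullet> (- transpose A *v (yp - ys))
      = - ((yp - ys) \<bullet> (A *v ((xp - xs) - (xk - xp))))"
    by (simp add: uminus_matrix_vector_mult inner_transpose_mult_vec scaleR_2 algebra_simps
        del: transpose_matrix_vector)
  ultimately have dual: "0 \<le> ((yk - yp) \<bullet> (yp - ys)) / s + (yp - ys) \<bullet> (A *v ((xp - xs) - (xk - xp)))"
    by simp
  have "((xk - xp) \<bullet> (xp - xs)) / t + ((yk - yp) \<bullet> (yp - ys)) / s
        - (yk - yp) \<bullet> (A *v (xp - xs)) - (yp - ys) \<bullet> (A *v (xk - xp))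
      = (((xk - xp) \<bullet> (xp - xs)) / t - (yk - ys) \<bullet> (A *v (xp - xs)))
        + (((yk - yp) \<bullet> (yp - ys)) / s + (yp - ys) \<bullet> (A *v ((xp - xs) - (xk - xp))))"
    by (simp only: matrix_vector_mult_diff_distrib inner_diff_left inner_diff_right)
  then have cross_nonneg: "0 \<le> ((xk - xp) \<bullet> (xp - xs)) / t + ((yk - yp) \<bullet> (yp - ys)) / s
        - (yk - yp) \<bullet> (A *v (xp - xs)) - (yp - ys) \<bullet> (A *v (xk - xp))"
    using primal dual by linarith
  have "M_norm2 A t s (xk - xs) (yk - ys) = M_norm2 A t s ((xk - xp) + (xp - xs)) ((yk - yp) + (yp - ys))"
    by simp
  also have "\<dots> = M_norm2 A t s (xp - xk) (yp - yk) + M_norm2 A t s (xp - xs) (yp - ys)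
      + 2 * (((xk - xp) \<bullet> (xp - xs)) / t + ((yk - yp) \<bullet> (yp - ys)) / s
             - (yk - yp) \<bullet> (A *v (xp - xs)) - (yp - ys) \<bullet> (A *v (xk - xp)))"
    unfolding M_norm2_add M_norm2_uminus[of A t s "xp - xk" "yp - yk", symmetric] by simp
  finally show ?thesis
    using cross_nonneg by simp
qed

lemma H_norm2_bounded_of_fejer:
  fixes A :: "real^'n^'m" and tau sigma :: "nat \<Rightarrow> real"
    and d :: "nat \<Rightarrow> real^'n" and e :: "nat \<Rightarrow> real^'m"
  assumes tau_pos: "\<And>k. tau k > 0" and sigma_pos: "\<And>k. sigma k > 0"
    and "summable (phi tau sigma)"
    and fejer: "\<And>k. m \<le> k \<Longrightarrow>
      M_norm2 A (tau k) (sigma k) (d (Suc k)) (e (Suc k)) \<le> M_norm2 A (tau k) (sigma k) (d k) (e k)"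
    and "a > 0"
    and coercive: "\<And>k. m \<le> k \<Longrightarrow>
      H_norm2 (tau k) (sigma k) (d k) (e k) \<le> a * M_norm2 A (tau k) (sigma k) (d k) (e k) + K"
  obtains B where "\<And>k. m \<le> k \<Longrightarrow> H_norm2 (tau k) (sigma k) (d k) (e k) \<le> B"
proof -
  define E where "E k = M_norm2 A (tau k) (sigma k) (d k) (e k)" for k
  define H where "H k = H_norm2 (tau k) (sigma k) (d k) (e k)" for k
  define F where "F k = E k + K / a" for k
  have phi_nonneg: "0 \<le> phi tau sigma k" for k
    by (simp add: phi_def)
  have H_le_F: "H k \<le> a * F k" if "m \<le> k" for k
    using coercive[OF that] \<open>a > 0\<close> by (simp add: F_def E_def H_def algebra_simps)
  have F_nonneg: "0 \<le> F k" if "m \<le> k" for k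
  proof -
    have "0 \<le> a * F k"
      using H_norm2_nonneg[OF tau_pos sigma_pos] H_le_F[OF that] unfolding H_def by (rule order_trans)
    then show ?thesis
      using \<open>a > 0\<close> by (simp add: zero_le_mult_iff)
  qed
  have "F (Suc k) * (1 - a * phi tau sigma k) \<le> F k" if "m \<le> k" for k
  proof -
    have "E (Suc k) \<le> M_norm2 A (tau k) (sigma k) (d (Suc k)) (e (Suc k)) + phi tau sigma k * H (Suc k)"
      unfolding E_def H_def by (rule M_norm2_stepsize_change) (simp_all add: tau_pos sigma_pos phi_def)
    also have "\<dots> \<le> E k + phi tau sigma k * (a * F (Suc k))"
    proof -
      have "phi tau sigma k * H (Suc k) \<le> phi tau sigma k * (a * F (Suc k))"
        using that by (intro mult_left_mono H_le_F phi_nonneg) auto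
      then show ?thesis
        using fejer[OF that] unfolding E_def by linarith
    qed
    finally show ?thesis
      using \<open>a > 0\<close> by (simp add: F_def algebra_simps)
  qed
  moreover have "summable (\<lambda>k. a * phi tau sigma k)"
    using \<open>summable (phi tau sigma)\<close> by (rule summable_mult)
  ultimately obtain B where F_le: "\<And>k. m \<le> k \<Longrightarrow> F k \<le> B"
    using bounded_of_summable_perturbed_decrease[of m F "\<lambda>k. a * phi tau sigma k"]
      F_nonneg phi_nonneg \<open>a > 0\<close> by auto
  then have "H k \<le> a * B" if "m \<le> k" for k
  proof -
    have "a * F k \<le> a * B"
      using F_le[OF that] \<open>a > 0\<close> by simp
    then show ?thesis
      using H_le_F[OF that] by linarith
  qed
  then show thesis
    unfolding H_def by (rule that)
qed

lemma pdhg_coercive_spectral: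
  fixes A :: "real^'n^'m" and tau sigma :: "nat \<Rightarrow> real"
  assumes tau_pos: "\<And>k. tau k > 0" and sigma_pos: "\<And>k. sigma k > 0"
    and "L * spectral_radius_sym (transpose A ** A) < 1" and "\<And>k. 0 < k \<Longrightarrow> tau k * sigma k < L"
  obtains a where "a > 0"
    and "\<And>k d e. 0 < k \<Longrightarrow> H_norm2 (tau k) (sigma k) d e \<le> a * M_norm2 A (tau k) (sigma k) d e"
proof -
  define c where "c = sqrt (L * spectral_radius_sym (transpose A ** A))"
  have "c < 1"
    using assms(3) by (simp add: c_def)
  have "H_norm2 (tau k) (sigma k) d e \<le> 1 / (1 - c) * M_norm2 A (tau k) (sigma k) d e" if "0 < k" for k d e
  proof -
    have "tau k * sigma k * spectral_radius_sym (transpose A ** A) \<le> L * spectral_radius_sym (transpose A ** A)"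
      using assms(4)[OF that] spectral_radius_sym_nonneg[of A] by (intro mult_right_mono) auto
    then have "(1 - c) * H_norm2 (tau k) (sigma k) d e \<le> M_norm2 A (tau k) (sigma k) d e"
      unfolding c_def by (rule M_norm2_ge_H_norm2_spectral[OF tau_pos sigma_pos])
    then show ?thesis
      using \<open>c < 1\<close> by (simp add: field_simps)
  qed
  moreover have "1 / (1 - c) > 0"
    using \<open>c < 1\<close> by simp
  ultimately show thesis
    using that by blast
qed

lemma pdhg_coercive_bounded:
  fixes A :: "real^'n^'m" and tau sigma :: "nat \<Rightarrow> real"
  assumes tau_pos: "\<And>k. tau k > 0" and sigma_pos: "\<And>k. sigma k > 0"
    and "bounded (range tau)" "bounded (range sigma)" and "bounded X \<or> bounded Y"
    and x_in: "\<And>k. 0 < k \<Longrightarrow> x k \<in> X" and y_in: "\<And>k. 0 < k \<Longrightarrow> y k \<in> Y"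
  obtains K where "\<And>k. 0 < k \<Longrightarrow> H_norm2 (tau k) (sigma k) (x k - xs) (y k - ys)
                  \<le> 2 * M_norm2 A (tau k) (sigma k) (x k - xs) (y k - ys) + K"
proof -
  obtain T where T: "\<And>k. tau k \<le> T"
    using \<open>bounded (range tau)\<close> unfolding bounded_iff by (auto intro: order_trans[OF abs_ge_self])
  obtain S where S: "\<And>k. sigma k \<le> S"
    using \<open>bounded (range sigma)\<close> unfolding bounded_iff by (auto intro: order_trans[OF abs_ge_self])
  from \<open>bounded X \<or> bounded Y\<close> show thesis
  proof
    assume "bounded X"
    then obtain D where "\<And>z. z \<in> X \<Longrightarrow> norm z \<le> D"
      unfolding bounded_iff by blast
    then have "norm (x k - xs) \<le> D + norm xs" if "0 < k" for k
      using x_in[OF that] norm_triangle_ineq4[of "x k" xs] by fastforce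
    then show thesis
      by (intro that[of "4 * S * (onorm ((*v) A))\<^sup>2 * (D + norm xs)\<^sup>2"]
          H_norm2_le_M_norm2_of_norm_fst_le[OF tau_pos sigma_pos S])
  next
    assume "bounded Y"
    then obtain D where "\<And>z. z \<in> Y \<Longrightarrow> norm z \<le> D"
      unfolding bounded_iff by blast
    then have "norm (y k - ys) \<le> D + norm ys" if "0 < k" for k
      using y_in[OF that] norm_triangle_ineq4[of "y k" ys] by fastforce
    then show thesis
      by (intro that[of "4 * T * (onorm ((*v) (transpose A)))\<^sup>2 * (D + norm ys)\<^sup>2"]
          H_norm2_le_M_norm2_of_norm_snd_le[OF tau_pos sigma_pos T])
  qed
qed

lemma pdhg_coercive_of_condC:
  fixes A :: "real^'n^'m" and tau sigma :: "nat \<Rightarrow> real"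
  assumes tau_pos: "\<And>k. tau k > 0" and sigma_pos: "\<And>k. sigma k > 0"
    and condA: "bounded (range tau) \<and> bounded (range sigma)"
    and x_in: "\<And>k. 0 < k \<Longrightarrow> x k \<in> X" and y_in: "\<And>k. 0 < k \<Longrightarrow> y k \<in> Y"
    and condC:
      "(\<exists>L. L * spectral_radius_sym (transpose A ** A) < 1 \<and> (\<forall>k>0. tau k * sigma k < L))
       \<or> ((bounded X \<or> bounded Y) \<and>
          (\<exists>c. 0 < c \<and> c < 1 \<and>
             (\<forall>k>0. M_norm2 A (tau k) (sigma k) (x (Suc k) - x k) (y (Suc k) - y k)
                    \<ge> c * H_norm2 (tau k) (sigma k) (x (Suc k) - x k) (y (Suc k) - y k))))"
  obtains a K where "a > 0"
    and "\<And>k. 0 < k \<Longrightarrow> H_norm2 (tau k) (sigma k) (x k - xs) (y k - ys)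
                          \<le> a * M_norm2 A (tau k) (sigma k) (x k - xs) (y k - ys) + K"
    and "\<And>k. 0 < k \<Longrightarrow> 0 \<le> M_norm2 A (tau k) (sigma k) (x (Suc k) - x k) (y (Suc k) - y k)"
  using condC
proof
  assume "\<exists>L. L * spectral_radius_sym (transpose A ** A) < 1 \<and> (\<forall>k>0. tau k * sigma k < L)"
  then obtain L where L: "L * spectral_radius_sym (transpose A ** A) < 1" "\<And>k. 0 < k \<Longrightarrow> tau k * sigma k < L"
    by blast
  obtain a where "a > 0"
    and coercive: "\<And>k d e. 0 < k \<Longrightarrow> H_norm2 (tau k) (sigma k) d e \<le> a * M_norm2 A (tau k) (sigma k) d e"
    by (rule pdhg_coercive_spectral[where tau = tau and sigma = sigma, OF tau_pos sigma_pos L]) auto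
  have "0 \<le> M_norm2 A (tau k) (sigma k) d e" if "0 < k" for k d e
  proof -
    have "0 \<le> a * M_norm2 A (tau k) (sigma k) d e"
      using H_norm2_nonneg[OF tau_pos sigma_pos] coercive[OF that] by (rule order_trans)
    then show ?thesis
      using \<open>a > 0\<close> by (simp add: zero_le_mult_iff)
  qed
  then show thesis
    using that[OF \<open>a > 0\<close>, of 0] coercive by simp
next
  assume "(bounded X \<or> bounded Y) \<and>
          (\<exists>c. 0 < c \<and> c < 1 \<and>
             (\<forall>k>0. M_norm2 A (tau k) (sigma k) (x (Suc k) - x k) (y (Suc k) - y k)
                    \<ge> c * H_norm2 (tau k) (sigma k) (x (Suc k) - x k) (y (Suc k) - y k)))"
  then obtain c where "bounded X \<or> bounded Y" "0 < c"
    and step: "\<And>k. 0 < k \<Longrightarrow> c * H_norm2 (tau k) (sigma k) (x (Suc k) - x k) (y (Suc k) - y k)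
                  \<le> M_norm2 A (tau k) (sigma k) (x (Suc k) - x k) (y (Suc k) - y k)"
    by blast
  have "0 \<le> M_norm2 A (tau k) (sigma k) (x (Suc k) - x k) (y (Suc k) - y k)" if "0 < k" for k
  proof -
    have "0 \<le> c * H_norm2 (tau k) (sigma k) (x (Suc k) - x k) (y (Suc k) - y k)"
      using \<open>0 < c\<close> by (intro mult_nonneg_nonneg H_norm2_nonneg tau_pos sigma_pos) auto
    then show ?thesis
      using step[OF that] by linarith
  qed
  moreover obtain K where "\<And>k. 0 < k \<Longrightarrow> H_norm2 (tau k) (sigma k) (x k - xs) (y k - ys)
      \<le> 2 * M_norm2 A (tau k) (sigma k) (x k - xs) (y k - ys) + K"
    by (rule pdhg_coercive_bounded[where tau = tau and sigma = sigma and A = A and xs = xs and ys = ys,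
        OF tau_pos sigma_pos conjunct1[OF condA] conjunct2[OF condA] \<open>bounded X \<or> bounded Y\<close> x_in y_in])
      auto
  ultimately show thesis
    using that[of 2 K] by simp
qed

theorem mainTheorem3:
  fixes A :: "real^'n^'m"
    and f :: "real^'n \<Rightarrow> real" and g :: "real^'m \<Rightarrow> real"
    and X :: "(real^'n) set" and Y :: "(real^'m) set"
    and tau sigma :: "nat \<Rightarrow> real"
    and x :: "nat \<Rightarrow> real^'n" and y :: "nat \<Rightarrow> real^'m"
    and xs :: "real^'n" and ys :: "real^'m"
  assumes f_convex: "convex_on UNIV f" and g_convex: "convex_on UNIV g"
    and X_convex: "convex X" and Y_convex: "convex Y"
    and tau_pos: "\<And>k. tau k > 0" and sigma_pos: "\<And>k. sigma k > 0"
    and x_step: "\<And>k. is_arg_min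
        (\<lambda>z. f z + (norm (z - (x k - tau k *\<^sub>R (transpose A *v y k))))^2 / (2 * tau k))
        (\<lambda>z. z \<in> X) (x (Suc k))"
    and y_step: "\<And>k. is_arg_min
        (\<lambda>w. g w + (norm (w - (y k + sigma k *\<^sub>R (A *v (2 *\<^sub>R x (Suc k) - x k)))))^2 / (2 * sigma k))
        (\<lambda>w. w \<in> Y) (y (Suc k))"
    and saddle_x: "0 \<in> (\<lambda>v. v + transpose A *v ys) ` subdiff (\<lambda>z. ereal (f z) + char_fun X z) xs"
    and saddle_y: "0 \<in> (\<lambda>v. v - A *v xs) ` subdiff (\<lambda>w. ereal (g w) + char_fun Y w) ys"
    and condA: "bounded (range tau) \<and> bounded (range sigma)"
    and condB: "\<exists>C_phi. summable (phi tau sigma) \<and> (\<Sum>k. phi tau sigma k) < C_phi"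
    and condC:
      "(\<exists>L. L * spectral_radius_sym (transpose A ** A) < 1 \<and> (\<forall>k>0. tau k * sigma k < L))
       \<or> ((bounded X \<or> bounded Y) \<and>
          (\<exists>c. 0 < c \<and> c < 1 \<and>
             (\<forall>k>0. M_norm2 A (tau k) (sigma k) (x (Suc k) - x k) (y (Suc k) - y k)
                    \<ge> c * H_norm2 (tau k) (sigma k) (x (Suc k) - x k) (y (Suc k) - y k))))"
  shows "\<exists>C_U>0. \<forall>k. H_norm2 (tau k) (sigma k) (x k - xs) (y k - ys) \<le> C_U"
proof -
  have x_in: "x k \<in> X" and y_in: "y k \<in> Y" if "0 < k" for k
    using that x_step[of "k - 1"] y_step[of "k - 1"] by (simp_all add: is_arg_min_def)
  obtain a K where "a > 0"
    and coercive: "\<And>k. 0 < k \<Longrightarrow> H_norm2 (tau k) (sigma k) (x k - xs) (y k - ys)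
                          \<le> a * M_norm2 A (tau k) (sigma k) (x k - xs) (y k - ys) + K"
    and step_nonneg: "\<And>k. 0 < k \<Longrightarrow> 0 \<le> M_norm2 A (tau k) (sigma k) (x (Suc k) - x k) (y (Suc k) - y k)"
    by (rule pdhg_coercive_of_condC[where tau = tau and sigma = sigma and xs = xs and ys = ys, OF tau_pos sigma_pos condA x_in y_in condC])
      auto
  have fejer: "M_norm2 A (tau k) (sigma k) (x (Suc k) - xs) (y (Suc k) - ys)
      \<le> M_norm2 A (tau k) (sigma k) (x k - xs) (y k - ys)" if "0 < k" for k
    using pdhg_fejer[OF f_convex g_convex X_convex Y_convex tau_pos[of k] sigma_pos[of k] x_step[of k] y_step[of k]
        saddle_x saddle_y] step_nonneg[OF that] by linarith
  obtain B where "\<And>k. 1 \<le> k \<Longrightarrow> H_norm2 (tau k) (sigma k) (x k - xs) (y k - ys) \<le> B"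
  proof (rule H_norm2_bounded_of_fejer[where tau = tau and sigma = sigma and m = 1 and A = A
        and d = "\<lambda>k. x k - xs" and e = "\<lambda>k. y k - ys" and a = a and K = K, OF tau_pos sigma_pos])
    show "summable (phi tau sigma)"
      using condB by blast
  qed (use fejer coercive \<open>a > 0\<close> in auto)
  then have "H_norm2 (tau k) (sigma k) (x k - xs) (y k - ys)
      \<le> max 1 (max B (H_norm2 (tau 0) (sigma 0) (x 0 - xs) (y 0 - ys)))" for k
    by (cases "k = 0") (auto simp: le_max_iff_disj)
  then show ?thesis
    by (intro exI[of _ "max 1 (max B (H_norm2 (tau 0) (sigma 0) (x 0 - xs) (y 0 - ys)))"]) simp
qed

end
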